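(* Let $p,q\in\mathbf{R}_+^n$, $K_0\in\mathbf{R}_+$, $w\in\mathbf{R}_{++}^n$ and $K=(K_1,\dots,K_n)$ with $K_i\in\mathbf{R}_+$, such that $0\le p_i<q_i\le p_i+K_i$ for $i=1,\dots,n$. Consider the problem \[ \begin{array}{ll} \mbox{maximize} & \mathbf{E}_{\pi}(w^{T}x-K_0)_+ \\ \mbox{subject to} & \mathbf{E}_{\pi}(x_i)=q_i,\\ & \mathbf{E}_{\pi}(x_i-K_i)_+=p_i,\quad i=1,\dots,n, \end{array} \] over all probability measures $\pi$ supported on $\mathbf{R}_+^n$ (the asset price vector $x$ having law $\pi$). Then the optimal value of this problem is bounded above by \[ d^{\sup}=\max_{0\le j\le n+1}\; w^{T}p+\sum_{i=1}^n w_i\min(q_i-p_i,\beta_jK_i)-\beta_jK_0, \] where $\beta_j:=(q_j-p_j)/K_j\in[0,1]$ for $j=1,\dots,n$, $\beta_0=0$ and $\beta_{n+1}=1$.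
   Context: $(y)_+=\max(y,0)$. $\mathbf{R}_{++}^n$ denotes vectors with strictly positive components. *)

theory Defs
  imports "HOL-Probability.Probability"
begin

definition d_sup :: "real^'n \<Rightarrow> real^'n \<Rightarrow> real \<Rightarrow> real^'n \<Rightarrow> real^'n \<Rightarrow> real" where
  "d_sup p q K0 K w =
     Max ((\<lambda>b. (\<Sum>i\<in>UNIV. w$i * p$i) + (\<Sum>i\<in>UNIV. w$i * min (q$i - p$i) (b * K$i)) - b * K0)
          ` ({0, 1} \<union> {(q$j - p$j) / K$j | j. True}))"

end

theory Submission
  imports Defs
begin

(*
  Weak duality with a static hedge. If 0 <= theta_i <= 1 and sum_i (1 - theta_i) w_i K_i <= K0,
  then splitting x_i = (x_i - K_i)_+ + min x_i K_i shows that on R_+^n the payoff (w^T x - K0)_+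
  is dominated by sum_i w_i (x_i - K_i)_+ + theta_i w_i min x_i K_i, whose expectation is fixed by
  the constraints: w^T p + sum_i theta_i w_i (q_i - p_i). Minimising this over theta is a
  fractional knapsack problem with weights w_i K_i and value ratios beta_i. The greedy solution
  (theta_i = 0 for the largest beta_i, one fractional item at a threshold b in {0} u {beta_j})
  costs exactly sum_i w_i min (q_i - p_i) (b K_i) - b K0, one of the terms of d_sup.
  Only the moment constraints enter.
*)

lemma knapsack_solution_at_threshold:
  fixes c \<beta> :: "'i \<Rightarrow> real" and b K0 :: real
  assumes "finite I" and c: "\<And>i. i \<in> I \<Longrightarrow> 0 \<le> c i"
    and above: "(\<Sum>i\<in>{i\<in>I. b < \<beta> i}. c i) \<le> K0"
    and at_least: "K0 \<le> (\<Sum>i\<in>{i\<in>I. b \<le> \<beta> i}. c i)"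
  obtains \<theta> where "\<And>i. i \<in> I \<Longrightarrow> 0 \<le> \<theta> i \<and> \<theta> i \<le> 1"
    and "(\<Sum>i\<in>I. (1 - \<theta> i) * c i) = K0"
    and "(\<Sum>i\<in>I. \<theta> i * c i * \<beta> i) = (\<Sum>i\<in>I. c i * min (\<beta> i) b) - b * K0"
proof -
  define A where "A = {i\<in>I. \<beta> i < b}"
  define B where "B = {i\<in>I. \<beta> i = b}"
  define C where "C = {i\<in>I. b < \<beta> i}"
  have sum_split: "(\<Sum>i\<in>I. f i) = sum f A + sum f B + sum f C" for f :: "'i \<Rightarrow> real"
  proof -
    have "I = (A \<union> B) \<union> C" by (auto simp: A_def B_def C_def)
    moreover have "finite A" "finite B" "finite C"
      using \<open>finite I\<close> by (simp_all add: A_def B_def C_def)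
    moreover have "(A \<union> B) \<inter> C = {}" "A \<inter> B = {}" by (auto simp: A_def B_def C_def)
    ultimately show ?thesis by (simp add: sum.union_disjoint)
  qed
  define E where "E = sum c B"
  define t where "t = (K0 - sum c C) / E"
    \<comment> \<open>if E = 0 the two bounds force K0 = sum c C, and t = 0 since x / 0 = 0\<close>
  have "{i\<in>I. b \<le> \<beta> i} = B \<union> C" by (auto simp: B_def C_def)
  then have "K0 \<le> E + sum c C"
    using at_least \<open>finite I\<close> by (simp add: E_def sum.union_disjoint B_def C_def disjoint_iff)
  moreover have "0 \<le> E" unfolding E_def B_def by (rule sum_nonneg) (simp add: c)
  moreover have "sum c C \<le> K0" using above by (simp add: C_def)
  ultimately have t: "0 \<le> t" "t \<le> 1" "K0 = sum c C + t * E"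
    by (auto simp: t_def divide_le_eq_1)
  define \<theta> where "\<theta> i = (if \<beta> i < b then 1 else if \<beta> i = b then 1 - t else 0)" for i
  have on_A: "\<theta> i = 1" "min (\<beta> i) b = \<beta> i" if "i \<in> A" for i
    using that by (auto simp: \<theta>_def A_def)
  have on_B: "\<theta> i = 1 - t" "\<beta> i = b" if "i \<in> B" for i
    using that by (auto simp: \<theta>_def B_def)
  have on_C: "\<theta> i = 0" "min (\<beta> i) b = b" if "i \<in> C" for i
    using that by (auto simp: \<theta>_def C_def)
  show thesis
  proof
    show "0 \<le> \<theta> i \<and> \<theta> i \<le> 1" for i using t by (simp add: \<theta>_def)
    have "(\<Sum>i\<in>I. (1 - \<theta> i) * c i) = sum c C + t * E"
      by (simp add: sum_split on_A on_B on_C E_def sum_distrib_left cong: sum.cong)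
    then show "(\<Sum>i\<in>I. (1 - \<theta> i) * c i) = K0" using t by simp
    have "(\<Sum>i\<in>I. \<theta> i * c i * \<beta> i) = (\<Sum>i\<in>A. c i * \<beta> i) + (1 - t) * b * E"
      by (simp add: sum_split on_A on_B on_C E_def sum_distrib_left mult_ac cong: sum.cong)
    also have "\<dots> = (\<Sum>i\<in>A. c i * \<beta> i) + b * (E + sum c C) - b * K0"
      using t by (simp add: algebra_simps)
    also have "\<dots> = (\<Sum>i\<in>I. c i * min (\<beta> i) b) - b * K0"
      by (simp add: sum_split on_A on_B on_C E_def distrib_left sum_distrib_left mult_ac cong: sum.cong)
    finally show "(\<Sum>i\<in>I. \<theta> i * c i * \<beta> i) = (\<Sum>i\<in>I. c i * min (\<beta> i) b) - b * K0" .
  qed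
qed

lemma knapsack_threshold_exists:
  fixes c \<beta> :: "'i \<Rightarrow> real" and K0 :: real
  assumes "finite I" and c: "\<And>i. i \<in> I \<Longrightarrow> 0 \<le> c i" and \<beta>: "\<And>i. i \<in> I \<Longrightarrow> 0 \<le> \<beta> i"
    and "0 \<le> K0" and "K0 \<le> sum c I"
  obtains b where "b \<in> insert 0 (\<beta> ` I)"
    and "(\<Sum>i\<in>{i\<in>I. b < \<beta> i}. c i) \<le> K0"
    and "K0 \<le> (\<Sum>i\<in>{i\<in>I. b \<le> \<beta> i}. c i)"
proof -
  define X where "X = {x \<in> insert 0 (\<beta> ` I). K0 \<le> (\<Sum>i\<in>{i\<in>I. x \<le> \<beta> i}. c i)}"
  have "{i\<in>I. 0 \<le> \<beta> i} = I" using \<beta> by auto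
  then have "0 \<in> X" using \<open>K0 \<le> sum c I\<close> by (simp add: X_def)
  moreover have "finite X" using \<open>finite I\<close> by (simp add: X_def)
  ultimately have "Max X \<in> X" and Max_ge: "\<And>x. x \<in> X \<Longrightarrow> x \<le> Max X"
    by (auto intro: Max_in)
  moreover have "(\<Sum>i\<in>{i\<in>I. Max X < \<beta> i}. c i) \<le> K0"
  proof (rule ccontr)
    \<comment> \<open>otherwise the next ratio above Max X would also lie in X\<close>
    define U where "U = {i\<in>I. Max X < \<beta> i}"
    assume "\<not> sum c U \<le> K0"
    with \<open>0 \<le> K0\<close> have "U \<noteq> {}" by auto
    moreover have "finite U" using \<open>finite I\<close> by (simp add: U_def)
    ultimately have "Min (\<beta> ` U) \<in> \<beta> ` U" and "\<And>i. i \<in> U \<Longrightarrow> Min (\<beta> ` U) \<le> \<beta> i"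
      by auto
    then have "Max X < Min (\<beta> ` U)" and "{i\<in>I. Min (\<beta> ` U) \<le> \<beta> i} = U"
      by (fastforce simp: U_def)+
    with \<open>\<not> sum c U \<le> K0\<close> \<open>Min (\<beta> ` U) \<in> \<beta> ` U\<close> have "Min (\<beta> ` U) \<in> X"
      by (auto simp: X_def U_def)
    with Max_ge \<open>Max X < Min (\<beta> ` U)\<close> show False by fastforce
  qed
  ultimately show thesis by (intro that[of "Max X"]) (auto simp: X_def)
qed

lemma fractional_knapsack_duality:
  fixes c \<beta> :: "'i \<Rightarrow> real" and K0 :: real
  assumes "finite I" and c: "\<And>i. i \<in> I \<Longrightarrow> 0 \<le> c i" and \<beta>: "\<And>i. i \<in> I \<Longrightarrow> 0 \<le> \<beta> i"
    and "0 \<le> K0"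
  obtains \<theta> b where "\<And>i. i \<in> I \<Longrightarrow> 0 \<le> \<theta> i \<and> \<theta> i \<le> 1"
    and "(\<Sum>i\<in>I. (1 - \<theta> i) * c i) \<le> K0"
    and "b \<in> insert 0 (\<beta> ` I)"
    and "(\<Sum>i\<in>I. \<theta> i * c i * \<beta> i) \<le> (\<Sum>i\<in>I. c i * min (\<beta> i) b) - b * K0"
proof (cases "sum c I \<le> K0")
  case True
  have "(\<Sum>i\<in>I. c i * min (\<beta> i) 0) = 0" using \<beta> by (simp add: min_absorb2)
  with True show thesis by (intro that[of "\<lambda>_. 0" 0]) auto
next
  case False
  then have "K0 \<le> sum c I" by simp
  then obtain b where b: "b \<in> insert 0 (\<beta> ` I)"
    and "(\<Sum>i\<in>{i\<in>I. b < \<beta> i}. c i) \<le> K0" "K0 \<le> (\<Sum>i\<in>{i\<in>I. b \<le> \<beta> i}. c i)"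
    using knapsack_threshold_exists[of I c \<beta> K0, OF assms] by blast
  then obtain \<theta> where "\<And>i. i \<in> I \<Longrightarrow> 0 \<le> \<theta> i \<and> \<theta> i \<le> 1"
    and "(\<Sum>i\<in>I. (1 - \<theta> i) * c i) = K0"
    and "(\<Sum>i\<in>I. \<theta> i * c i * \<beta> i) = (\<Sum>i\<in>I. c i * min (\<beta> i) b) - b * K0"
    using knapsack_solution_at_threshold[of I c b, OF \<open>finite I\<close> c] by blast
  with b show thesis by (intro that[of \<theta> b]) auto
qed

lemma basket_call_le_static_hedge:
  fixes w x K \<theta> :: "'i \<Rightarrow> real" and K0 :: real
  assumes "\<And>i. i \<in> I \<Longrightarrow> 0 \<le> w i" "\<And>i. i \<in> I \<Longrightarrow> 0 \<le> K i" "\<And>i. i \<in> I \<Longrightarrow> 0 \<le> x i"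
    and "\<And>i. i \<in> I \<Longrightarrow> 0 \<le> \<theta> i \<and> \<theta> i \<le> 1"
    and budget: "(\<Sum>i\<in>I. (1 - \<theta> i) * (w i * K i)) \<le> K0"
  shows "max ((\<Sum>i\<in>I. w i * x i) - K0) 0
    \<le> (\<Sum>i\<in>I. w i * max (x i - K i) 0 + \<theta> i * w i * min (x i) (K i))"
proof -
  have "w i * x i \<le> w i * max (x i - K i) 0 + \<theta> i * w i * min (x i) (K i) + (1 - \<theta> i) * (w i * K i)"
    if "i \<in> I" for i
  proof -
    have "w i * x i = w i * max (x i - K i) 0 + \<theta> i * w i * min (x i) (K i)
        + (1 - \<theta> i) * w i * min (x i) (K i)"
      by (simp add: algebra_simps max_def min_def)
    also have "(1 - \<theta> i) * w i * min (x i) (K i) \<le> (1 - \<theta> i) * w i * K i"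
      using assms(1,4) that by (intro mult_left_mono) auto
    finally show ?thesis by (simp add: mult.assoc)
  qed
  then have "(\<Sum>i\<in>I. w i * x i)
      \<le> (\<Sum>i\<in>I. w i * max (x i - K i) 0 + \<theta> i * w i * min (x i) (K i) + (1 - \<theta> i) * (w i * K i))"
    by (rule sum_mono)
  then have "(\<Sum>i\<in>I. w i * x i) - K0
      \<le> (\<Sum>i\<in>I. w i * max (x i - K i) 0 + \<theta> i * w i * min (x i) (K i))"
    using budget by (simp add: sum.distrib)
  moreover have "0 \<le> (\<Sum>i\<in>I. w i * max (x i - K i) 0 + \<theta> i * w i * min (x i) (K i))"
    using assms(1-4) by (intro sum_nonneg) simp
  ultimately show ?thesis by simp
qed

lemma static_hedge_integral_bound:
  fixes w K p q :: "real^'n" and \<theta> :: "'n \<Rightarrow> real" and K0 :: real and M :: "(real^'n) measure"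
  assumes "sets M = sets borel" and "AE x in M. \<forall>i. 0 \<le> x$i"
    and "\<And>i. 0 \<le> w$i" "\<And>i. 0 \<le> K$i" "\<And>i. 0 \<le> \<theta> i \<and> \<theta> i \<le> 1"
    and "(\<Sum>i\<in>UNIV. (1 - \<theta> i) * (w$i * K$i)) \<le> K0"
    and "\<And>i. integrable M (\<lambda>x. x$i)" "\<And>i. integral\<^sup>L M (\<lambda>x. x$i) = q$i"
    and "\<And>i. integrable M (\<lambda>x. max (x$i - K$i) 0)"
    and "\<And>i. integral\<^sup>L M (\<lambda>x. max (x$i - K$i) 0) = p$i"
  shows "integrable M (\<lambda>x. max ((\<Sum>i\<in>UNIV. w$i * x$i) - K0) 0)
    \<and> integral\<^sup>L M (\<lambda>x. max ((\<Sum>i\<in>UNIV. w$i * x$i) - K0) 0)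
      \<le> (\<Sum>i\<in>UNIV. w$i * p$i + \<theta> i * w$i * (q$i - p$i))"
proof -
  define f where "f x = max ((\<Sum>i\<in>UNIV. w$i * x$i) - K0) 0" for x :: "real^'n"
  define g where "g x = (\<Sum>i\<in>UNIV. w$i * max (x$i - K$i) 0 + \<theta> i * w$i * min (x$i) (K$i))"
    for x :: "real^'n"
  have min_eq: "min (x$i) (K$i) = x$i - max (x$i - K$i) 0" for x :: "real^'n" and i by auto
  have g_integrable: "integrable M g"
    unfolding g_def min_eq using assms(7,9) by auto
  have g_integral: "integral\<^sup>L M g = (\<Sum>i\<in>UNIV. w$i * p$i + \<theta> i * w$i * (q$i - p$i))"
    unfolding g_def min_eq using assms(7-10) by (simp add: integrable_diff)
  have "f \<in> borel_measurable borel" unfolding f_def by measurable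
  then have f_measurable: "f \<in> borel_measurable M"
    by (subst measurable_cong_sets[OF assms(1) refl])
  have f_le_g: "AE x in M. 0 \<le> f x \<and> f x \<le> g x"
    using assms(2)
  proof eventually_elim
    case (elim x)
    have "f x \<le> g x" unfolding f_def g_def
      using elim assms(3-6) by (intro basket_call_le_static_hedge) auto
    then show ?case by (simp add: f_def)
  qed
  have "integrable M f"
    using f_le_g by (intro Bochner_Integration.integrable_bound[OF g_integrable f_measurable]) auto
  moreover have "integral\<^sup>L M f \<le> integral\<^sup>L M g"
    using f_le_g by (intro integral_mono_AE \<open>integrable M f\<close> g_integrable) auto
  ultimately show ?thesis by (simp add: f_def[abs_def] g_integral)
qed

lemma d_sup_ge:
  assumes "b \<in> {0, 1} \<union> {(q$j - p$j) / K$j | j. True}"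
  shows "(\<Sum>i\<in>UNIV. w$i * p$i) + (\<Sum>i\<in>UNIV. w$i * min (q$i - p$i) (b * K$i)) - b * K0
    \<le> d_sup p q K0 K w"
  unfolding d_sup_def using assms by (intro Max_ge) (auto simp: full_SetCompr_eq)

lemma hedge_weights_dual_bound:
  fixes p q K w :: "real^'n" and K0 :: real
  assumes "0 \<le> K0" and "\<And>i. 0 \<le> w$i" and "\<And>i. 0 < K$i" and "\<And>i. p$i \<le> q$i"
  obtains \<theta> b where "\<And>i. 0 \<le> \<theta> i \<and> \<theta> i \<le> 1"
    and "(\<Sum>i\<in>UNIV. (1 - \<theta> i) * (w$i * K$i)) \<le> K0"
    and "b \<in> {0, 1} \<union> {(q$j - p$j) / K$j | j. True}"
    and "(\<Sum>i\<in>UNIV. \<theta> i * w$i * (q$i - p$i))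
      \<le> (\<Sum>i\<in>UNIV. w$i * min (q$i - p$i) (b * K$i)) - b * K0"
proof -
  define \<beta> where "\<beta> i = (q$i - p$i) / K$i" for i
  have nonneg: "0 \<le> w$i * K$i" "0 \<le> \<beta> i" for i
    using assms(2-4)[of i] by (simp_all add: \<beta>_def less_imp_le)
  obtain \<theta> b where \<theta>: "\<And>i. 0 \<le> \<theta> i \<and> \<theta> i \<le> 1"
    and budget: "(\<Sum>i\<in>UNIV. (1 - \<theta> i) * (w$i * K$i)) \<le> K0"
    and b: "b \<in> insert 0 (range \<beta>)"
    and dual: "(\<Sum>i\<in>UNIV. \<theta> i * (w$i * K$i) * \<beta> i)
      \<le> (\<Sum>i\<in>UNIV. w$i * K$i * min (\<beta> i) b) - b * K0"
    by (rule fractional_knapsack_duality[of UNIV "\<lambda>i. w$i * K$i" \<beta> K0])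
      (use nonneg assms(1) in auto)
  have K_\<beta>: "K$i * \<beta> i = q$i - p$i" and K_min: "K$i * min (\<beta> i) b = min (q$i - p$i) (b * K$i)"
    for i using assms(3)[of i] by (simp_all add: \<beta>_def min_mult_distrib_left mult.commute)
  have "\<theta> i * (w$i * K$i) * \<beta> i = \<theta> i * w$i * (q$i - p$i)" for i
    by (simp only: mult.assoc flip: K_\<beta>)
  moreover have "w$i * K$i * min (\<beta> i) b = w$i * min (q$i - p$i) (b * K$i)" for i
    by (simp only: mult.assoc flip: K_min)
  ultimately have "(\<Sum>i\<in>UNIV. \<theta> i * w$i * (q$i - p$i))
      \<le> (\<Sum>i\<in>UNIV. w$i * min (q$i - p$i) (b * K$i)) - b * K0"
    using dual by (simp only:)
  moreover have "b \<in> {0, 1} \<union> {(q$j - p$j) / K$j | j. True}"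
    using b by (auto simp: \<beta>_def)
  ultimately show thesis using \<theta> budget that by blast
qed

theorem proposition4:
  fixes p q K w :: "real^'n" and K0 :: real and M :: "(real^'n) measure"
  assumes "K0 \<ge> 0"
    and "\<And>i. w$i > 0"
    and "\<And>i. K$i \<ge> 0"
    and "\<And>i. 0 \<le> p$i \<and> p$i < q$i \<and> q$i \<le> p$i + K$i"
    and "prob_space M" and "sets M = sets borel"
    and "AE x in M. \<forall>i. x$i \<ge> 0"
    and "\<And>i. integrable M (\<lambda>x. x$i)"
    and "\<And>i. integral\<^sup>L M (\<lambda>x. x$i) = q$i"
    and "\<And>i. integrable M (\<lambda>x. max (x$i - K$i) 0)"
    and "\<And>i. integral\<^sup>L M (\<lambda>x. max (x$i - K$i) 0) = p$i"
  shows "integrable M (\<lambda>x. max ((\<Sum>i\<in>UNIV. w$i * x$i) - K0) 0)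
    \<and> integral\<^sup>L M (\<lambda>x. max ((\<Sum>i\<in>UNIV. w$i * x$i) - K0) 0) \<le> d_sup p q K0 K w"
proof -
  have w_nonneg: "0 \<le> w$i" and K_pos: "0 < K$i" and "p$i \<le> q$i" for i
    using assms(2,4)[of i] by (auto simp: less_imp_le)
  then obtain \<theta> b where \<theta>: "\<And>i. 0 \<le> \<theta> i \<and> \<theta> i \<le> 1"
    and budget: "(\<Sum>i\<in>UNIV. (1 - \<theta> i) * (w$i * K$i)) \<le> K0"
    and b: "b \<in> {0, 1} \<union> {(q$j - p$j) / K$j | j. True}"
    and dual: "(\<Sum>i\<in>UNIV. \<theta> i * w$i * (q$i - p$i))
      \<le> (\<Sum>i\<in>UNIV. w$i * min (q$i - p$i) (b * K$i)) - b * K0"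
    using hedge_weights_dual_bound[OF assms(1)] by blast
  note hedge = static_hedge_integral_bound[OF assms(6,7) w_nonneg assms(3) \<theta> budget assms(8-11)]
  then have "integral\<^sup>L M (\<lambda>x. max ((\<Sum>i\<in>UNIV. w$i * x$i) - K0) 0)
      \<le> (\<Sum>i\<in>UNIV. w$i * p$i) + (\<Sum>i\<in>UNIV. \<theta> i * w$i * (q$i - p$i))"
    by (simp add: sum.distrib)
  also have "\<dots> \<le> (\<Sum>i\<in>UNIV. w$i * p$i) + (\<Sum>i\<in>UNIV. w$i * min (q$i - p$i) (b * K$i)) - b * K0"
    using dual by simp
  also have "\<dots> \<le> d_sup p q K0 K w"
    using b by (rule d_sup_ge)
  finally show ?thesis using hedge by simp
qed

end
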